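(* Let $G$ be a symmetric connected graph of order $n\ge 3$ and let $g:A\to B$ be any function. Then $1\leq fix(G)+fix(F_G)\leq 3n-4$. Both bounds are sharp.
   Context: All graphs are simple, finite, nontrivial and connected. A set $S\subseteq V(H)$ is a fixing set of a graph $H$ if the only automorphism of $H$ fixing every vertex of $S$ is the identity; $fix(H)$ is the minimum cardinality of a fixing set of $H$. A connected graph $G$ is symmetric if $fix(G)\neq 0$ (i.e. $G$ has a nontrivial automorphism). Functigraph: let $G_1,G_2$ be disjoint copies of a connected graph $G$, with $A=V(G_1)$, $B=V(G_2)$, and let $g:A\to B$ be a function. The functigraph $F_G$ has vertex set $A\cup B$ and edge set $E(G_1)\cup E(G_2)\cup\{ug(u):u\in A\}$. *)

theory Defs
  imports Main
begin

definition sgraph :: "'a set \<Rightarrow> ('a \<Rightarrow> 'a \<Rightarrow> bool) \<Rightarrow> bool" where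
  "sgraph V E \<longleftrightarrow> finite V \<and> V \<noteq> {} \<and>
     (\<forall>u v. E u v \<longrightarrow> u \<in> V \<and> v \<in> V) \<and>
     (\<forall>u v. E u v \<longrightarrow> E v u) \<and> (\<forall>u. \<not> E u u)"

definition gconnected :: "'a set \<Rightarrow> ('a \<Rightarrow> 'a \<Rightarrow> bool) \<Rightarrow> bool" where
  "gconnected V E \<longleftrightarrow> (\<forall>u\<in>V. \<forall>v\<in>V. (u, v) \<in> {(x, y). E x y}\<^sup>*)"

definition automorphism :: "'a set \<Rightarrow> ('a \<Rightarrow> 'a \<Rightarrow> bool) \<Rightarrow> ('a \<Rightarrow> 'a) \<Rightarrow> bool" where
  "automorphism V E \<sigma> \<longleftrightarrow> bij_betw \<sigma> V V \<and>
     (\<forall>u\<in>V. \<forall>v\<in>V. E u v \<longleftrightarrow> E (\<sigma> u) (\<sigma> v))"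

definition fixing_set :: "'a set \<Rightarrow> ('a \<Rightarrow> 'a \<Rightarrow> bool) \<Rightarrow> 'a set \<Rightarrow> bool" where
  "fixing_set V E S \<longleftrightarrow> S \<subseteq> V \<and>
     (\<forall>\<sigma>. automorphism V E \<sigma> \<and> (\<forall>x\<in>S. \<sigma> x = x) \<longrightarrow> (\<forall>x\<in>V. \<sigma> x = x))"

definition fix_num :: "'a set \<Rightarrow> ('a \<Rightarrow> 'a \<Rightarrow> bool) \<Rightarrow> nat" where
  "fix_num V E = (LEAST k. \<exists>S. fixing_set V E S \<and> card S = k)"

definition symmetric_graph :: "'a set \<Rightarrow> ('a \<Rightarrow> 'a \<Rightarrow> bool) \<Rightarrow> bool" where
  "symmetric_graph V E \<longleftrightarrow> fix_num V E \<noteq> 0"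

text \<open>Functigraph: G1 = Inl-copy (A), G2 = Inr-copy (B); g maps A to B,
  represented as a function on the vertices of G with g ` V \<subseteq> V.\<close>
definition functi_V :: "'a set \<Rightarrow> ('a + 'a) set" where
  "functi_V V = Inl ` V \<union> Inr ` V"

fun functi_E :: "('a \<Rightarrow> 'a \<Rightarrow> bool) \<Rightarrow> ('a \<Rightarrow> 'a) \<Rightarrow> 'a + 'a \<Rightarrow> 'a + 'a \<Rightarrow> bool" where
  "functi_E E g (Inl u) (Inl v) = E u v"
| "functi_E E g (Inr u) (Inr v) = E u v"
| "functi_E E g (Inl u) (Inr v) = (v = g u)"
| "functi_E E g (Inr v) (Inl u) = (v = g u)"

end

theory Submission
  imports Defs "HOL-Combinatorics.Transposition"
begin

text \<open>The lower bound is the symmetry of G. For the upper bound, the complement of a single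
  vertex fixes every graph, and the functigraph is fixed by the complement of three vertices any
  two of which are distinguished by adjacency to a vertex outside them; such a triple always exists.
  The path with a suitable g has a rigid functigraph and attains the lower bound; the complete
  graph with constant g attains the upper one, because a fixing set must contain all but at most
  one vertex of every class of twins.\<close>

lemma fix_num_le_card: "fixing_set V E S \<Longrightarrow> fix_num V E \<le> card S"
  unfolding fix_num_def by (rule Least_le) blast

lemma fixing_set_carrier: "fixing_set V E V"
  unfolding fixing_set_def by blast

lemma fix_num_attained:
  obtains S where "fixing_set V E S" "card S = fix_num V E"
  using LeastI_ex[of "\<lambda>k. \<exists>S. fixing_set V E S \<and> card S = k"] fixing_set_carrier
  unfolding fix_num_def by blast

lemma fix_num_eq_0_iff:
  assumes "finite V"
  shows "fix_num V E = 0 \<longleftrightarrow> fixing_set V E {}"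
proof
  assume "fix_num V E = 0"
  then obtain S where S: "fixing_set V E S" "card S = 0" by (metis fix_num_attained)
  then have "finite S" using assms unfolding fixing_set_def by (meson finite_subset)
  with S show "fixing_set V E {}" by simp
qed (use fix_num_le_card in fastforce)

lemma automorphism_in: "automorphism V E \<sigma> \<Longrightarrow> x \<in> V \<Longrightarrow> \<sigma> x \<in> V"
  unfolding automorphism_def by (meson bij_betwE)

lemma automorphism_inj_on: "automorphism V E \<sigma> \<Longrightarrow> inj_on \<sigma> V"
  unfolding automorphism_def by (meson bij_betw_imp_inj_on)

lemma automorphism_image: "automorphism V E \<sigma> \<Longrightarrow> \<sigma> ` V = V"
  unfolding automorphism_def by (meson bij_betw_imp_surj_on)

lemma automorphism_adj_iff:
  "automorphism V E \<sigma> \<Longrightarrow> x \<in> V \<Longrightarrow> y \<in> V \<Longrightarrow> E (\<sigma> x) (\<sigma> y) \<longleftrightarrow> E x y"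
  unfolding automorphism_def by blast

definition distinguished_by_complement :: "'a set \<Rightarrow> ('a \<Rightarrow> 'a \<Rightarrow> bool) \<Rightarrow> 'a set \<Rightarrow> bool" where
  "distinguished_by_complement V E T \<longleftrightarrow>
     (\<forall>x\<in>T. \<forall>y\<in>T. x \<noteq> y \<longrightarrow> (\<exists>z\<in>V - T. E x z \<noteq> E y z))"

lemma fixing_set_Diff_distinguished:
  assumes "T \<subseteq> V" and "distinguished_by_complement V E T"
  shows "fixing_set V E (V - T)"
  unfolding fixing_set_def
proof (intro conjI allI impI ballI)
  fix \<sigma> x
  assume "automorphism V E \<sigma> \<and> (\<forall>x\<in>V - T. \<sigma> x = x)" and x: "x \<in> V"
  then have \<sigma>: "automorphism V E \<sigma>" and fixed: "\<And>z. z \<in> V - T \<Longrightarrow> \<sigma> z = z" by auto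
  show "\<sigma> x = x"
  proof (rule ccontr)
    assume moved: "\<sigma> x \<noteq> x"
    have \<sigma>x: "\<sigma> x \<in> V" using automorphism_in[OF \<sigma> x] .
    have "x \<in> T" using fixed x moved by blast
    have "\<sigma> x \<in> T"
    proof (rule ccontr)
      assume "\<sigma> x \<notin> T"
      then have "\<sigma> (\<sigma> x) = \<sigma> x" using fixed \<sigma>x by blast
      then show False
        using moved inj_onD[OF automorphism_inj_on[OF \<sigma>] _ \<sigma>x x] by blast
    qed
    then obtain z where z: "z \<in> V - T" "E x z \<noteq> E (\<sigma> x) z"
      using assms(2) \<open>x \<in> T\<close> moved unfolding distinguished_by_complement_def by metis
    then have "E (\<sigma> x) (\<sigma> z) = E x z" using automorphism_adj_iff[OF \<sigma> x] by blast
    with z fixed show False by simp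
  qed
qed (use assms in blast)

lemma fix_num_le_card_minus_1:
  assumes "finite V" "V \<noteq> {}"
  shows "fix_num V E \<le> card V - 1"
proof -
  obtain x where "x \<in> V" using assms by blast
  then have "fixing_set V E (V - {x})"
    by (intro fixing_set_Diff_distinguished) (auto simp: distinguished_by_complement_def)
  then show ?thesis using fix_num_le_card \<open>x \<in> V\<close> assms by fastforce
qed

definition degree :: "'a set \<Rightarrow> ('a \<Rightarrow> 'a \<Rightarrow> bool) \<Rightarrow> 'a \<Rightarrow> nat" where
  "degree V E v = card {u \<in> V. E v u}"

lemma degree_automorphism:
  assumes \<sigma>: "automorphism V E \<sigma>" and v: "v \<in> V"
  shows "degree V E (\<sigma> v) = degree V E v"
proof -
  have "{u \<in> V. E (\<sigma> v) u} = \<sigma> ` {u \<in> V. E v u}"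
  proof (intro equalityI subsetI)
    fix w assume "w \<in> {u \<in> V. E (\<sigma> v) u}"
    then have w: "w \<in> V" "E (\<sigma> v) w" by auto
    then obtain u where u: "u \<in> V" "w = \<sigma> u" using automorphism_image[OF \<sigma>] by blast
    then have "E v u" using w automorphism_adj_iff[OF \<sigma> v u(1)] by simp
    with u show "w \<in> \<sigma> ` {u \<in> V. E v u}" by blast
  next
    fix w assume "w \<in> \<sigma> ` {u \<in> V. E v u}"
    then obtain u where u: "u \<in> V" "E v u" "w = \<sigma> u" by blast
    then have "E (\<sigma> v) w" using automorphism_adj_iff[OF \<sigma> v u(1)] by simp
    with u show "w \<in> {u \<in> V. E (\<sigma> v) u}" using automorphism_in[OF \<sigma> u(1)] by simp
  qed
  moreover have "inj_on \<sigma> {u \<in> V. E v u}"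
    using automorphism_inj_on[OF \<sigma>] by (rule inj_on_subset) blast
  ultimately show ?thesis unfolding degree_def by (simp add: card_image)
qed

lemma card_le_degree:
  assumes "finite V" "N \<subseteq> V" "\<And>u. u \<in> N \<Longrightarrow> E v u"
  shows "card N \<le> degree V E v"
  unfolding degree_def by (rule card_mono) (use assms in auto)

lemma degree_le_card:
  assumes "finite N" "\<And>u. u \<in> V \<Longrightarrow> E v u \<Longrightarrow> u \<in> N"
  shows "degree V E v \<le> card N"
  unfolding degree_def by (rule card_mono) (use assms in auto)

lemma automorphism_fixes_unique_degree:
  assumes "automorphism V E \<sigma>" "w \<in> V"
    and "\<And>v. v \<in> V \<Longrightarrow> degree V E v = degree V E w \<Longrightarrow> v = w"
  shows "\<sigma> w = w"
  using assms automorphism_in degree_automorphism by metis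

lemma automorphism_fixes_neighbour:
  assumes \<sigma>: "automorphism V E \<sigma>" and x: "x \<in> V" "\<sigma> x = x"
    and w: "w \<in> V" "E x w" "P (degree V E w)"
    and others: "\<And>v. v \<in> V \<Longrightarrow> E x v \<Longrightarrow> P (degree V E v) \<Longrightarrow> v \<noteq> w \<Longrightarrow> \<sigma> v = v"
  shows "\<sigma> w = w"
proof (rule ccontr)
  assume moved: "\<sigma> w \<noteq> w"
  have \<sigma>w: "\<sigma> w \<in> V" using automorphism_in[OF \<sigma> w(1)] .
  have "E x (\<sigma> w)" using automorphism_adj_iff[OF \<sigma> x(1) w(1)] x(2) w(2) by simp
  moreover have "P (degree V E (\<sigma> w))" using degree_automorphism[OF \<sigma> w(1)] w(3) by simp
  ultimately have "\<sigma> (\<sigma> w) = \<sigma> w" using others \<sigma>w moved by blast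
  then show False using moved inj_onD[OF automorphism_inj_on[OF \<sigma>] _ \<sigma>w w(1)] by blast
qed

lemma automorphism_fixes_last_neighbour:
  assumes "automorphism V E \<sigma>" "x \<in> V" "\<sigma> x = x" "w \<in> V" "E x w"
    and "\<And>v. v \<in> V \<Longrightarrow> E x v \<Longrightarrow> v \<noteq> w \<Longrightarrow> \<sigma> v = v"
  shows "\<sigma> w = w"
  by (rule automorphism_fixes_neighbour[OF assms(1-5), where P = "\<lambda>_. True"]) (use assms(6) in auto)

lemma automorphism_transpose_twins:
  assumes sym: "\<And>u v. E u v \<Longrightarrow> E v u" and irrefl: "\<And>u. \<not> E u u"
    and "a \<in> V" "b \<in> V"
    and twins: "\<And>z. z \<in> V \<Longrightarrow> z \<noteq> a \<Longrightarrow> z \<noteq> b \<Longrightarrow> E a z \<longleftrightarrow> E b z"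
  shows "automorphism V E (transpose a b)"
  unfolding automorphism_def
proof (intro conjI ballI)
  show "bij_betw (transpose a b) V V"
    using assms by (simp add: bij_betw_def inj_on_transpose transpose_image_eq)
  fix u v assume "u \<in> V" "v \<in> V"
  show "E u v \<longleftrightarrow> E (transpose a b u) (transpose a b v)"
  proof (cases "u \<in> {a, b}"; cases "v \<in> {a, b}")
    assume "u \<in> {a, b}" "v \<in> {a, b}"
    then show ?thesis using sym irrefl by auto
  next
    assume "u \<in> {a, b}" "v \<notin> {a, b}"
    then show ?thesis using twins[OF \<open>v \<in> V\<close>] by auto
  next
    assume "u \<notin> {a, b}" "v \<in> {a, b}"
    moreover have "E u a \<longleftrightarrow> E u b" if "u \<notin> {a, b}"
      using twins[OF \<open>u \<in> V\<close>] sym that by blast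
    ultimately show ?thesis by auto
  qed auto
qed

lemma card_twins_le_fixing_set:
  assumes sym: "\<And>u v. E u v \<Longrightarrow> E v u" and irrefl: "\<And>u. \<not> E u u"
    and X: "finite X" "X \<subseteq> V"
    and twins: "\<And>a b z. a \<in> X \<Longrightarrow> b \<in> X \<Longrightarrow> z \<in> V \<Longrightarrow> z \<noteq> a \<Longrightarrow> z \<noteq> b \<Longrightarrow> E a z \<longleftrightarrow> E b z"
    and S: "fixing_set V E S"
  shows "card X \<le> card (X \<inter> S) + 1"
proof -
  have "card (X - S) \<le> Suc 0"
  proof (rule card_le_Suc0_iff_eq[THEN iffD2])
    show "finite (X - S)" using X by simp
    show "\<forall>x\<in>X - S. \<forall>y\<in>X - S. x = y"
    proof (intro ballI, rule ccontr)
      fix x y assume x: "x \<in> X - S" and y: "y \<in> X - S" and "x \<noteq> y"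
      have "automorphism V E (transpose x y)"
        by (rule automorphism_transpose_twins[OF sym irrefl]) (use x y X twins in auto)
      moreover have "\<forall>s\<in>S. transpose x y s = s" using x y by (metis DiffD2 transpose_apply_other)
      ultimately have "transpose x y x = x" using S x X unfolding fixing_set_def by blast
      with \<open>x \<noteq> y\<close> show False by simp
    qed
  qed
  then show ?thesis using card_Int_Diff[OF X(1), of S] by linarith
qed

lemma functi_V_simps [simp]:
  "Inl x \<in> functi_V V \<longleftrightarrow> x \<in> V" "Inr x \<in> functi_V V \<longleftrightarrow> x \<in> V"
  unfolding functi_V_def by auto

lemma functi_V_cases [consumes 1, case_names Inl Inr]:
  assumes "v \<in> functi_V V"
  obtains x where "x \<in> V" "v = Inl x" | x where "x \<in> V" "v = Inr x"
  using assms unfolding functi_V_def by blast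

lemma finite_functi_V: "finite V \<Longrightarrow> finite (functi_V V)"
  unfolding functi_V_def by simp

lemma card_functi_V: "finite V \<Longrightarrow> card (functi_V V) = 2 * card V"
  unfolding functi_V_def by (subst card_Un_disjoint) (auto simp: card_image)

lemma functi_E_sym: "(\<And>u v. E u v \<Longrightarrow> E v u) \<Longrightarrow> functi_E E g p q \<Longrightarrow> functi_E E g q p"
  by (cases p; cases q) auto

lemma functi_E_irrefl: "(\<And>u. \<not> E u u) \<Longrightarrow> \<not> functi_E E g p p"
  by (cases p) auto

lemma obtain_third_element:
  assumes "finite V" "3 \<le> card V"
  obtains z where "z \<in> V" "z \<noteq> x" "z \<noteq> y"
proof -
  have "\<not> V \<subseteq> {x, y}"
  proof
    assume "V \<subseteq> {x, y}"
    then have "card V \<le> card {x, y}" by (simp add: card_mono)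
    also have "\<dots> \<le> 2" by (simp add: card_insert_if)
    finally show False using assms(2) by simp
  qed
  then show ?thesis using that by blast
qed

lemma gconnected_obtain_neighbour:
  assumes "gconnected V E" "c \<in> V" "v \<in> V" "v \<noteq> c"
  obtains w where "E c w"
proof -
  have "(c, v) \<in> {(x, y). E x y}\<^sup>*" using assms unfolding gconnected_def by blast
  then show ?thesis using assms(4) that by (cases rule: converse_rtranclE) auto
qed

lemma functigraph_Inr_distinguished:
  assumes "T \<subseteq> Inr ` V" "a \<in> g ` V" "a \<noteq> b"
  shows "\<exists>z\<in>functi_V V - T. functi_E E g (Inr a) z \<noteq> functi_E E g (Inr b) z"
proof -
  obtain u where "u \<in> V" "a = g u" using assms(2) by blast
  then show ?thesis using assms(1,3) by (intro bexI[of _ "Inl u"]) auto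
qed

lemma functigraph_image_triple_distinguished:
  assumes "g ` V \<subseteq> V" "x \<in> g ` V" "y \<in> g ` V" "x \<noteq> y" "z \<in> V" "z \<noteq> x" "z \<noteq> y"
  shows "distinguished_by_complement (functi_V V) (functi_E E g) {Inr x, Inr y, Inr z}"
proof -
  have T: "{Inr x, Inr y, Inr z} \<subseteq> Inr ` V" using assms by auto
  note distinguished = functigraph_Inr_distinguished[OF T, of _ g b E for b]
  show ?thesis
    unfolding distinguished_by_complement_def
    using distinguished[OF assms(2)] distinguished[OF assms(3)] assms(4,6,7) by (auto, metis)+
qed

lemma functigraph_constant_triple_distinguished:
  assumes "\<And>u. u \<in> V \<Longrightarrow> g u = c" "c \<in> V" "E c w" "w \<in> V" "w \<noteq> c" "y \<in> V" "y \<noteq> c" "y \<noteq> w"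
  shows "distinguished_by_complement (functi_V V) (functi_E E g) {Inl c, Inr c, Inr y}"
proof -
  let ?T = "{Inl c, Inr c, Inr y}"
  have "functi_E E g (Inl c) (Inr w) \<noteq> functi_E E g (Inr c) (Inr w)"
    "functi_E E g (Inl c) (Inl w) \<noteq> functi_E E g (Inr y) (Inl w)"
    "functi_E E g (Inr c) (Inl y) \<noteq> functi_E E g (Inr y) (Inl y)"
    using assms by auto
  moreover have "Inr w \<in> functi_V V - ?T" "Inl w \<in> functi_V V - ?T" "Inl y \<in> functi_V V - ?T"
    using assms by auto
  ultimately show ?thesis
    unfolding distinguished_by_complement_def by (auto simp del: functi_E.simps)
qed

lemma fix_num_functigraph_le:
  assumes sg: "sgraph V E" and con: "gconnected V E" and c3: "3 \<le> card V" and gV: "g ` V \<subseteq> V"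
  shows "fix_num (functi_V V) (functi_E E g) \<le> 2 * card V - 3"
proof -
  have fin: "finite V" using sg unfolding sgraph_def by blast
  obtain T where T: "T \<subseteq> functi_V V" "card T = 3"
    "distinguished_by_complement (functi_V V) (functi_E E g) T"
  proof (cases "\<exists>x\<in>g ` V. \<exists>y\<in>g ` V. x \<noteq> y")
    case True
    then obtain x y where xy: "x \<in> g ` V" "y \<in> g ` V" "x \<noteq> y" by blast
    obtain z where "z \<in> V" "z \<noteq> x" "z \<noteq> y" using obtain_third_element[OF fin c3] by blast
    with xy gV show ?thesis
      by (intro that[of "{Inr x, Inr y, Inr z}"] functigraph_image_triple_distinguished)
        (auto simp: card_insert_if)
  next
    case False
    obtain a where "a \<in> V" using sg unfolding sgraph_def by blast
    then have c: "g a \<in> V" and gc: "\<And>u. u \<in> V \<Longrightarrow> g u = g a" using gV False by blast+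
    obtain v where "v \<in> V" "v \<noteq> g a" using obtain_third_element[OF fin c3] by blast
    then obtain w where w: "E (g a) w" using gconnected_obtain_neighbour[OF con c] by blast
    then have "w \<in> V" "w \<noteq> g a" using sg unfolding sgraph_def by blast+
    moreover obtain y where "y \<in> V" "y \<noteq> g a" "y \<noteq> w" using obtain_third_element[OF fin c3] by blast
    ultimately show ?thesis
      using gc c w by (intro that[of "{Inl (g a), Inr (g a), Inr y}"]
          functigraph_constant_triple_distinguished[of V g "g a" E w y]) (auto simp: card_insert_if)
  qed
  have "fix_num (functi_V V) (functi_E E g) \<le> card (functi_V V - T)"
    by (intro fix_num_le_card fixing_set_Diff_distinguished T)
  also have "\<dots> = 2 * card V - 3"
    using T(1,2) card_Diff_subset[OF finite_subset[OF T(1)] T(1)] finite_functi_V[OF fin]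
      card_functi_V[OF fin] by simp
  finally show ?thesis .
qed

definition path_graph :: "nat \<Rightarrow> nat \<Rightarrow> nat \<Rightarrow> bool" where
  "path_graph n i j \<longleftrightarrow> i < n \<and> j < n \<and> (j = Suc i \<or> i = Suc j)"

lemma sgraph_path_graph: "1 \<le> n \<Longrightarrow> sgraph {..<n} (path_graph n)"
  unfolding sgraph_def path_graph_def by (auto simp: lessThan_empty_iff)

lemma gconnected_path_graph: "gconnected {..<n} (path_graph n)"
proof -
  let ?R = "{(x, y). path_graph n x y}"
  have "(0, k) \<in> ?R\<^sup>* \<and> (k, 0) \<in> ?R\<^sup>*" if "k < n" for k
    using that
  proof (induction k)
    case (Suc k)
    then have "(k, Suc k) \<in> ?R" "(Suc k, k) \<in> ?R" by (auto simp: path_graph_def)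
    with Suc show ?case by (meson Suc_lessD rtrancl.rtrancl_into_rtrancl converse_rtrancl_into_rtrancl)
  qed simp
  then show ?thesis unfolding gconnected_def by (meson lessThan_iff rtrancl_trans)
qed

lemma fixing_set_path_graph_end: "1 \<le> n \<Longrightarrow> fixing_set {..<n} (path_graph n) {0}"
  unfolding fixing_set_def
proof (intro conjI allI impI ballI)
  fix \<sigma> x assume "automorphism {..<n} (path_graph n) \<sigma> \<and> (\<forall>x\<in>{0}. \<sigma> x = x)" "x \<in> {..<n}"
  then have \<sigma>: "automorphism {..<n} (path_graph n) \<sigma>" and "\<sigma> 0 = 0" and "x < n" by auto
  have "\<forall>j\<le>k. \<sigma> j = j" if "k < n" for k
    using that
  proof (induction k)
    case (Suc k)
    have "\<sigma> (Suc k) = Suc k"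
      by (rule automorphism_fixes_last_neighbour[OF \<sigma>, of k])
        (use Suc in \<open>auto simp: path_graph_def\<close>)
    with Suc show ?case by (auto simp: le_Suc_eq)
  qed (simp add: \<open>\<sigma> 0 = 0\<close>)
  then show "\<sigma> x = x" using \<open>x < n\<close> by blast
qed simp

lemma automorphism_path_graph_reverse: "automorphism {..<n} (path_graph n) (\<lambda>i. n - 1 - i)"
  unfolding automorphism_def
proof
  show "bij_betw (\<lambda>i. n - 1 - i) {..<n} {..<n}"
    by (rule bij_betw_byWitness[where f' = "\<lambda>i. n - 1 - i"]) auto
qed (auto simp: path_graph_def)

lemma fix_num_path_graph: "2 \<le> n \<Longrightarrow> fix_num {..<n} (path_graph n) = 1"
proof -
  assume "2 \<le> n"
  have "\<not> fixing_set {..<n} (path_graph n) {}"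
  proof
    assume "fixing_set {..<n} (path_graph n) {}"
    then have "n - 1 - 0 = 0"
      using automorphism_path_graph_reverse \<open>2 \<le> n\<close> unfolding fixing_set_def by fastforce
    with \<open>2 \<le> n\<close> show False by simp
  qed
  then have "fix_num {..<n} (path_graph n) \<noteq> 0" by (simp add: fix_num_eq_0_iff)
  moreover have "fix_num {..<n} (path_graph n) \<le> 1"
    using fix_num_le_card[OF fixing_set_path_graph_end] \<open>2 \<le> n\<close> by fastforce
  ultimately show ?thesis by simp
qed

text \<open>Joining vertex n - 1 of the first copy to vertex 1 of the second and every other vertex
  to vertex 0 leaves the copy of n - 1 in the second path as the only vertex of degree one;
  starting there, all vertices are fixed one neighbour at a time.\<close>

definition path_link :: "nat \<Rightarrow> nat \<Rightarrow> nat" where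
  "path_link n i = (if i = n - 1 then 1 else 0)"

lemma path_functigraph_degree_eq_1_iff:
  assumes "3 \<le> n" "v \<in> functi_V {..<n}"
  shows "degree (functi_V {..<n}) (functi_E (path_graph n) (path_link n)) v = 1 \<longleftrightarrow> v = Inr (n - 1)"
proof -
  let ?FV = "functi_V {..<n}" and ?FE = "functi_E (path_graph n) (path_link n)"
  show ?thesis
  proof
    assume "v = Inr (n - 1)"
    have "{u \<in> ?FV. ?FE (Inr (n - 1)) u} = {Inr (n - 2)}"
      using assms(1) by (auto elim!: functi_V_cases simp: path_graph_def path_link_def split: if_splits)
    then show "degree ?FV ?FE v = 1" unfolding degree_def \<open>v = Inr (n - 1)\<close> by simp
  next
    assume deg: "degree ?FV ?FE v = 1"
    show "v = Inr (n - 1)"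
    proof (rule ccontr)
      assume "v \<noteq> Inr (n - 1)"
      obtain a b where "a \<in> ?FV" "b \<in> ?FV" "a \<noteq> b" "?FE v a" "?FE v b"
        using assms(2)
      proof (cases rule: functi_V_cases)
        case (Inl i)
        show ?thesis
          by (rule that[of "Inr (path_link n i)" "Inl (if i = 0 then 1 else i - 1)"])
            (use Inl assms(1) in \<open>auto simp: path_graph_def path_link_def\<close>)
      next
        case (Inr i)
        show ?thesis
          by (rule that[of "Inr (Suc i)" "if i = 0 then Inl 0 else Inr (i - 1)"])
            (use Inr \<open>v \<noteq> Inr (n - 1)\<close> in \<open>auto simp: path_graph_def path_link_def\<close>)
      qed
      then have "card {a, b} \<le> degree ?FV ?FE v"
        by (intro card_le_degree finite_functi_V) auto
      with deg \<open>a \<noteq> b\<close> show False by simp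
    qed
  qed
qed

lemma path_functigraph_fixes_Inr_pos:
  assumes n: "3 \<le> n" and \<sigma>: "automorphism (functi_V {..<n}) (functi_E (path_graph n) (path_link n)) \<sigma>"
    and "1 \<le> j" "j < n"
  shows "\<sigma> (Inr j) = Inr j"
proof -
  let ?FV = "functi_V {..<n}" and ?FE = "functi_E (path_graph n) (path_link n)"
  have "\<forall>j. m \<le> j \<longrightarrow> j < n \<longrightarrow> \<sigma> (Inr j) = Inr j" if "1 \<le> m" "m \<le> n - 1" for m
    using that(2)
  proof (induction rule: inc_induct)
    case base
    have "\<sigma> (Inr (n - 1)) = Inr (n - 1)"
    proof (rule automorphism_fixes_unique_degree[OF \<sigma>])
      show "Inr (n - 1) \<in> ?FV" using n by simp
      fix v assume "v \<in> ?FV" "degree ?FV ?FE v = degree ?FV ?FE (Inr (n - 1))"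
      then show "v = Inr (n - 1)"
        using path_functigraph_degree_eq_1_iff[OF n] \<open>Inr (n - 1) \<in> ?FV\<close> by metis
    qed
    then show ?case by (metis Suc_pred' le_antisym less_Suc_eq_le less_nat_zero_code not_gr_zero)
  next
    case (step k)
    have "\<sigma> (Inr k) = Inr k"
      by (rule automorphism_fixes_last_neighbour[OF \<sigma>, of "Inr (Suc k)"])
        (use step that(1) in \<open>auto elim!: functi_V_cases simp: path_graph_def path_link_def split: if_splits\<close>)
    with step show ?case by (metis le_antisym not_less_eq_eq)
  qed
  then show ?thesis using assms(3,4) n by auto
qed

lemma path_functigraph_fixes_Inr:
  assumes n: "3 \<le> n" and \<sigma>: "automorphism (functi_V {..<n}) (functi_E (path_graph n) (path_link n)) \<sigma>"
    and "j < n"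
  shows "\<sigma> (Inr j) = Inr j"
proof -
  let ?FV = "functi_V {..<n}" and ?FE = "functi_E (path_graph n) (path_link n)"
  note upper = path_functigraph_fixes_Inr_pos[OF n \<sigma>]
  have "card ({Inr 1, Inl 0, Inl 1} :: (nat + nat) set) \<le> degree ?FV ?FE (Inr 0)"
    by (rule card_le_degree) (use n in \<open>auto simp: finite_functi_V path_graph_def path_link_def\<close>)
  then have high: "3 \<le> degree ?FV ?FE (Inr 0)" by simp
  have low: "degree ?FV ?FE (Inl (n - 1)) < 3"
  proof -
    have "degree ?FV ?FE (Inl (n - 1)) \<le> card ({Inl (n - 2), Inr 1} :: (nat + nat) set)"
      by (rule degree_le_card) (use n in \<open>auto elim!: functi_V_cases simp: path_graph_def path_link_def\<close>)
    then show ?thesis by (simp add: card_insert_if)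
  qed
  have others: "\<sigma> v = v"
    if "v \<in> ?FV" "?FE (Inr 1) v" "3 \<le> degree ?FV ?FE v" "v \<noteq> Inr 0" for v
    using that(1)
  proof (cases rule: functi_V_cases)
    case (Inl i)
    have "path_link n i = 1" using that(2) Inl(2) by simp
    then have "i = n - 1" unfolding path_link_def by (metis zero_neq_one)
    with Inl(2) that(3) low show ?thesis by simp
  next
    case (Inr i)
    then show ?thesis using that(4) upper[of i] by simp
  qed
  have "\<sigma> (Inr 0) = Inr 0"
    by (rule automorphism_fixes_neighbour[OF \<sigma>, of "Inr 1" _ "\<lambda>d. 3 \<le> d", OF _ _ _ _ high others])
      (use n upper in \<open>simp_all add: path_graph_def\<close>)
  with upper \<open>j < n\<close> show ?thesis by (cases "j = 0") auto
qed

lemma path_functigraph_fixes_Inl: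
  assumes n: "3 \<le> n" and \<sigma>: "automorphism (functi_V {..<n}) (functi_E (path_graph n) (path_link n)) \<sigma>"
    and "j < n"
  shows "\<sigma> (Inl j) = Inl j"
proof -
  let ?FV = "functi_V {..<n}" and ?FE = "functi_E (path_graph n) (path_link n)"
  note fixed_Inr = path_functigraph_fixes_Inr[OF n \<sigma>]
  have "\<forall>j. m \<le> j \<longrightarrow> j < n \<longrightarrow> \<sigma> (Inl j) = Inl j" if "m \<le> n - 1" for m
    using that
  proof (induction rule: inc_induct)
    case base
    have others: "\<sigma> v = v" if "v \<in> ?FV" "?FE (Inr 1) v" "v \<noteq> Inl (n - 1)" for v
      using that(1)
    proof (cases rule: functi_V_cases)
      case (Inl i)
      have "path_link n i = 1" using that(2) Inl(2) by simp
      then have "i = n - 1" unfolding path_link_def by (metis zero_neq_one)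
      with Inl(2) that(3) show ?thesis by simp
    qed (simp add: fixed_Inr)
    have "\<sigma> (Inl (n - 1)) = Inl (n - 1)"
      by (rule automorphism_fixes_last_neighbour[OF \<sigma> _ _ _ _ others])
        (use n fixed_Inr[of 1] in \<open>simp_all add: path_link_def\<close>)
    then show ?case by (metis le_antisym less_Suc_eq_le Suc_pred' n less_le_trans zero_less_numeral)
  next
    case (step k)
    have others: "\<sigma> v = v" if "v \<in> ?FV" "?FE (Inl (Suc k)) v" "v \<noteq> Inl k" for v
      using that(1)
    proof (cases rule: functi_V_cases)
      case (Inl i)
      with that(2,3) step.IH show ?thesis by (auto simp: path_graph_def)
    qed (simp add: fixed_Inr)
    have "\<sigma> (Inl k) = Inl k"
      by (rule automorphism_fixes_last_neighbour[OF \<sigma> _ _ _ _ others])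
        (use step in \<open>auto simp: path_graph_def\<close>)
    with step show ?case by (metis le_antisym not_less_eq_eq)
  qed
  then show ?thesis using \<open>j < n\<close> by blast
qed

lemma fix_num_path_functigraph:
  assumes "3 \<le> n"
  shows "fix_num (functi_V {..<n}) (functi_E (path_graph n) (path_link n)) = 0"
proof -
  have "fixing_set (functi_V {..<n}) (functi_E (path_graph n) (path_link n)) {}"
    unfolding fixing_set_def
    using path_functigraph_fixes_Inl[OF assms] path_functigraph_fixes_Inr[OF assms]
    by (auto elim!: functi_V_cases)
  then show ?thesis by (simp add: fix_num_eq_0_iff finite_functi_V)
qed

definition complete_graph :: "nat \<Rightarrow> nat \<Rightarrow> nat \<Rightarrow> bool" where
  "complete_graph n i j \<longleftrightarrow> i < n \<and> j < n \<and> i \<noteq> j"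

lemma sgraph_complete_graph: "1 \<le> n \<Longrightarrow> sgraph {..<n} (complete_graph n)"
  unfolding sgraph_def complete_graph_def by (auto simp: lessThan_empty_iff)

lemma gconnected_complete_graph: "gconnected {..<n} (complete_graph n)"
  unfolding gconnected_def complete_graph_def
  by (metis (mono_tags, lifting) case_prodI lessThan_iff mem_Collect_eq r_into_rtrancl rtrancl.rtrancl_refl)

lemma fix_num_complete_graph:
  assumes "1 \<le> n"
  shows "fix_num {..<n} (complete_graph n) = n - 1"
proof -
  obtain S where S: "fixing_set {..<n} (complete_graph n) S" "card S = fix_num {..<n} (complete_graph n)"
    using fix_num_attained by blast
  have "card {..<n} \<le> card ({..<n} \<inter> S) + 1"
    by (rule card_twins_le_fixing_set[OF _ _ _ _ _ S(1)]) (auto simp: complete_graph_def)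
  moreover have "{..<n} \<inter> S = S" using S(1) unfolding fixing_set_def by auto
  ultimately have "n - 1 \<le> fix_num {..<n} (complete_graph n)" using S by simp
  moreover have "fix_num {..<n} (complete_graph n) \<le> n - 1"
    using fix_num_le_card_minus_1[of "{..<n}"] assms by (simp add: lessThan_empty_iff)
  ultimately show ?thesis by simp
qed

text \<open>With g constant, the first copy of K_n and the second copy minus the image of g are
  two sets of pairwise twins, so a fixing set misses at most one vertex of each.\<close>

lemma fix_num_complete_functigraph:
  assumes n: "3 \<le> n"
  shows "fix_num (functi_V {..<n}) (functi_E (complete_graph n) (\<lambda>_. 0)) = 2 * n - 3"
proof -
  let ?FV = "functi_V {..<n}" and ?FE = "functi_E (complete_graph n) (\<lambda>_. 0)"
  obtain S where S: "fixing_set ?FV ?FE S" "card S = fix_num ?FV ?FE"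
    using fix_num_attained by blast
  have "finite S" using S(1) finite_functi_V[of "{..<n}"] finite_subset
    unfolding fixing_set_def by blast
  have sym: "\<And>p q. ?FE p q \<Longrightarrow> ?FE q p"
    by (rule functi_E_sym) (auto simp: complete_graph_def)
  have irrefl: "\<And>p. \<not> ?FE p p"
    by (rule functi_E_irrefl) (simp add: complete_graph_def)
  let ?X1 = "Inl ` {..<n} :: (nat + nat) set" and ?X2 = "Inr ` {1..<n} :: (nat + nat) set"
  have "card ?X1 \<le> card (?X1 \<inter> S) + 1"
    by (rule card_twins_le_fixing_set[OF sym irrefl _ _ _ S(1)])
      (auto elim!: functi_V_cases simp: complete_graph_def)
  moreover have "card ?X2 \<le> card (?X2 \<inter> S) + 1"
    by (rule card_twins_le_fixing_set[OF sym irrefl _ _ _ S(1)])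
      (auto elim!: functi_V_cases simp: complete_graph_def)
  moreover have "card (?X1 \<inter> S) + card (?X2 \<inter> S) \<le> card S"
    using card_Un_disjoint[of "?X1 \<inter> S" "?X2 \<inter> S"] card_mono[of S "(?X1 \<inter> S) \<union> (?X2 \<inter> S)"]
      \<open>finite S\<close> by fastforce
  moreover have "card ?X1 = n" "card ?X2 = n - 1" by (simp_all add: card_image)
  ultimately have "2 * n - 3 \<le> fix_num ?FV ?FE" using S(2) n by linarith
  moreover have "fix_num ?FV ?FE \<le> 2 * card {..<n} - 3"
    by (rule fix_num_functigraph_le) (use n sgraph_complete_graph gconnected_complete_graph in auto)
  ultimately show ?thesis by simp
qed

theorem mainTheorem2:
  shows "(\<forall>(V :: 'a set) E g.
            sgraph V E \<and> gconnected V E \<and> symmetric_graph V E \<and> card V \<ge> 3 \<and> g ` V \<subseteq> V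
            \<longrightarrow> 1 \<le> fix_num V E + fix_num (functi_V V) (functi_E E g) \<and>
                fix_num V E + fix_num (functi_V V) (functi_E E g) \<le> 3 * card V - 4)
       \<and> (\<forall>n \<ge> 3.
            (\<exists>(V :: nat set) E g. sgraph V E \<and> gconnected V E \<and> symmetric_graph V E \<and>
               card V = n \<and> g ` V \<subseteq> V \<and>
               fix_num V E + fix_num (functi_V V) (functi_E E g) = 1) \<and>
            (\<exists>(V :: nat set) E g. sgraph V E \<and> gconnected V E \<and> symmetric_graph V E \<and>
               card V = n \<and> g ` V \<subseteq> V \<and>
               fix_num V E + fix_num (functi_V V) (functi_E E g) = 3 * n - 4))"
proof (intro conjI allI impI)
  fix V :: "'a set" and E g
  assume "sgraph V E \<and> gconnected V E \<and> symmetric_graph V E \<and> card V \<ge> 3 \<and> g ` V \<subseteq> V"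
  then have G: "sgraph V E" "gconnected V E" "fix_num V E \<noteq> 0" "3 \<le> card V" "g ` V \<subseteq> V"
    unfolding symmetric_graph_def by auto
  then have "fix_num V E \<le> card V - 1"
    using fix_num_le_card_minus_1 unfolding sgraph_def by blast
  with fix_num_functigraph_le[OF G(1,2,4,5)] G(3,4)
  show "1 \<le> fix_num V E + fix_num (functi_V V) (functi_E E g)"
    and "fix_num V E + fix_num (functi_V V) (functi_E E g) \<le> 3 * card V - 4"
    by linarith+
next
  fix n :: nat assume n: "3 \<le> n"
  show "\<exists>(V :: nat set) E g. sgraph V E \<and> gconnected V E \<and> symmetric_graph V E \<and>
          card V = n \<and> g ` V \<subseteq> V \<and> fix_num V E + fix_num (functi_V V) (functi_E E g) = 1"
    using n sgraph_path_graph gconnected_path_graph fix_num_path_graph fix_num_path_functigraph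
    by (intro exI[of _ "{..<n}"] exI[of _ "path_graph n"] exI[of _ "path_link n"])
      (auto simp: symmetric_graph_def path_link_def)
  show "\<exists>(V :: nat set) E g. sgraph V E \<and> gconnected V E \<and> symmetric_graph V E \<and>
          card V = n \<and> g ` V \<subseteq> V \<and> fix_num V E + fix_num (functi_V V) (functi_E E g) = 3 * n - 4"
    using n sgraph_complete_graph gconnected_complete_graph fix_num_complete_graph
      fix_num_complete_functigraph
    by (intro exI[of _ "{..<n}"] exI[of _ "complete_graph n"] exI[of _ "\<lambda>_. 0"])
      (auto simp: symmetric_graph_def)
qed

end
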